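(* Let $c\ge0$, $d>0$ and $p_{(\alpha,\beta)}(\omega):=(\alpha-\omega^2)(c-id\omega-\omega^2)-\beta\omega^2$ for real $\alpha,\beta$. Then: (i) For fixed $\alpha\in\mathbb{R}\setminus\{0\}$, $p_{(\alpha,\beta)}$ has a multiple root for at most $4$ values $\beta\in\mathbb{R}$. (ii) For fixed $\beta\in\mathbb{R}\setminus\{0\}$, $p_{(\alpha,\beta)}$ has a multiple root for at most $5$ values $\alpha\in\mathbb{R}$. (iii) $p_{(0,\beta)}$ has a double root at $0$ and the roots $\pm\sqrt{\beta+c-d^2/4}-id/2$. (iv) $p_{(\alpha,0)}$ has the roots $\pm\sqrt{\alpha}$ and $\pm\sqrt{c-d^2/4}-id/2$.
   Context: $\sqrt{\cdot}$ denotes the principal square root. *)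

theory Defs
  imports "HOL-Analysis.Analysis" "HOL-Computational_Algebra.Polynomial"
begin

definition pab :: "real \<Rightarrow> real \<Rightarrow> real \<Rightarrow> real \<Rightarrow> complex poly" where
  "pab c d \<alpha> \<beta> =
     [:complex_of_real \<alpha>, 0, -1:] * [:complex_of_real c, - \<i> * complex_of_real d, -1:]
     - smult (complex_of_real \<beta>) [:0, 0, 1:]"

definition has_multiple_root :: "complex poly \<Rightarrow> bool" where
  "has_multiple_root p \<longleftrightarrow> (\<exists>z. 2 \<le> order z p)"

end

theory Submission imports Defs begin

text \<open>
  A multiple root z of p is a common root of p and p'. Since \<beta> enters p only through the
  term -\<beta>w^2, the combination z p'(z) - 2 p(z) does not involve \<beta>; likewise \<alpha> enters only
  through \<alpha>(c - idw - w^2), so a combination of p and p' with the derivative of that factor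
  as weight does not involve \<alpha>. Hence every \<beta> (resp. \<alpha>) for which p has a multiple root
  is a function of a root of a fixed nonzero polynomial of degree 4 (resp. 5).
  Parts (iii) and (iv) are explicit factorisations of p.
\<close>

lemma has_multiple_root_imp_common_root:
  assumes "has_multiple_root p"
  obtains z where "poly p z = 0" "poly (pderiv p) z = 0"
proof (cases "p = 0")
  case False
  from assms obtain z where z: "2 \<le> order z p"
    unfolding has_multiple_root_def by blast
  then have root: "poly p z = 0"
    using False order_root by fastforce
  have "poly (pderiv p) z = 0"
  proof (cases "pderiv p = 0")
    case False
    have "order z p = Suc (order z (pderiv p))"
      using order_pderiv[OF \<open>p \<noteq> 0\<close> root] .
    with z show ?thesis using order_root by fastforce
  qed simp
  with root that show ?thesis by blast
qed (use that in simp)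

lemma finite_card_le_degree_if_determined_by_roots:
  fixes q :: "'b::idom poly"
  assumes "q \<noteq> 0" "inj_on g S" "\<forall>x\<in>S. \<exists>z. poly q z = 0 \<and> g x = F z"
  shows "finite S \<and> card S \<le> degree q"
proof -
  let ?R = "{z. poly q z = 0}"
  have fin: "finite ?R" using poly_roots_finite[OF assms(1)] .
  have sub: "g ` S \<subseteq> F ` ?R" using assms(3) by blast
  have "finite (g ` S)"
    using finite_subset[OF sub finite_imageI[OF fin]] .
  then have "finite S" using finite_imageD assms(2) by blast
  have "card S = card (g ` S)" using card_image[OF assms(2)] by simp
  also have "\<dots> \<le> card (F ` ?R)" using card_mono[OF finite_imageI[OF fin] sub] .
  also have "\<dots> \<le> card ?R" using card_image_le[OF fin] .
  also have "\<dots> \<le> degree q" using card_poly_roots_bound[OF assms(1)] .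
  finally show ?thesis using \<open>finite S\<close> by blast
qed

lemma pab_eq_coeffs:
  "pab c d \<alpha> \<beta> = [:of_real (\<alpha>*c), -\<i> * of_real (\<alpha>*d), -of_real (\<alpha>+c+\<beta>), \<i> * of_real d, 1:]"
  by (subst poly_eq_poly_eq_iff[symmetric]) (auto simp: pab_def algebra_simps power2_eq_square)

lemma pab_nonzero: "pab c d \<alpha> \<beta> \<noteq> 0"
  unfolding pab_eq_coeffs by simp

lemma poly_pab:
  "poly (pab c d \<alpha> \<beta>) w = (of_real \<alpha> - w^2) * (of_real c - \<i> * of_real d * w - w^2) - of_real \<beta> * w^2"
  by (simp add: pab_def algebra_simps power2_eq_square)

lemma poly_pderiv_pab:
  "poly (pderiv (pab c d \<alpha> \<beta>)) w =
     -\<i> * of_real (\<alpha>*d) - 2 * of_real (\<alpha>+c+\<beta>) * w + 3 * \<i> * of_real d * w^2 + 4 * w^3"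
  unfolding pab_eq_coeffs by (simp add: pderiv_pCons algebra_simps power2_eq_square power3_eq_cube)

lemma poly_pderiv_pab_0: "poly (pderiv (pab c d \<alpha> \<beta>)) 0 = -\<i> * of_real (\<alpha>*d)"
  by (simp add: poly_pderiv_pab)

lemma poly_beta_eliminant:
  "poly [:-2 * of_real (\<alpha>*c), \<i> * of_real (\<alpha>*d), 0, \<i> * of_real d, 2:] z =
     z * poly (pderiv (pab c d \<alpha> \<beta>)) z - 2 * poly (pab c d \<alpha> \<beta>) z"
  unfolding poly_pab poly_pderiv_pab by (simp add: algebra_simps power2_eq_square power3_eq_cube)

lemma poly_alpha_eliminant:
  "poly [:0, of_real (2*c^2 + 2*\<beta>*c), -\<i> * of_real (4*c*d + \<beta>*d), -of_real (2*d^2 + 4*c),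
          4 * \<i> * of_real d, 2:] z =
     (-\<i> * of_real d - 2*z) * poly (pab c d \<alpha> \<beta>) z
     - (of_real c - \<i> * of_real d * z - z^2) * poly (pderiv (pab c d \<alpha> \<beta>)) z"
  unfolding poly_pab poly_pderiv_pab by (simp add: algebra_simps power2_eq_square power3_eq_cube)

lemma finite_card_betas_with_multiple_root:
  assumes "d > 0" "\<alpha> \<noteq> 0"
  shows "finite {\<beta>. has_multiple_root (pab c d \<alpha> \<beta>)} \<and> card {\<beta>. has_multiple_root (pab c d \<alpha> \<beta>)} \<le> 4"
proof -
  define q where "q = [:-2 * of_real (\<alpha>*c), \<i> * of_real (\<alpha>*d), 0, \<i> * of_real d, 2:]"
  define F where "F z = (of_real \<alpha> - z^2) * (of_real c - \<i> * of_real d * z - z^2) / z^2" for z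
  have "\<exists>z. poly q z = 0 \<and> of_real \<beta> = F z" if multiple: "has_multiple_root (pab c d \<alpha> \<beta>)" for \<beta>
  proof -
    obtain z where p: "poly (pab c d \<alpha> \<beta>) z = 0" and p': "poly (pderiv (pab c d \<alpha> \<beta>)) z = 0"
      using has_multiple_root_imp_common_root[OF multiple] by blast
    have "z \<noteq> 0"
      using p' assms poly_pderiv_pab_0[of c d \<alpha> \<beta>] by auto
    have "poly q z = 0"
      using p p' poly_beta_eliminant[where \<alpha>=\<alpha> and \<beta>=\<beta>] unfolding q_def by simp
    moreover have "of_real \<beta> = F z"
      using p \<open>z \<noteq> 0\<close> unfolding poly_pab F_def by (simp add: eq_divide_eq)
    ultimately show ?thesis by blast
  qed
  moreover have "q \<noteq> 0" "degree q = 4" unfolding q_def by simp_all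
  ultimately show ?thesis
    using finite_card_le_degree_if_determined_by_roots[of q complex_of_real _ F] by (simp add: inj_on_def)
qed

lemma finite_card_alphas_with_multiple_root:
  assumes "d > 0" "\<beta> \<noteq> 0"
  shows "finite {\<alpha>. has_multiple_root (pab c d \<alpha> \<beta>)} \<and> card {\<alpha>. has_multiple_root (pab c d \<alpha> \<beta>)} \<le> 5"
proof -
  define q where "q = [:0, of_real (2*c^2 + 2*\<beta>*c), -\<i> * of_real (4*c*d + \<beta>*d), -of_real (2*d^2 + 4*c),
          4 * \<i> * of_real d, 2:]"
  define g where "g z = of_real c - \<i> * of_real d * z - z^2" for z :: complex
  define F where "F z = (if g z = 0 then 0 else z^2 + of_real \<beta> * z^2 / g z)" for z
  have "\<exists>z. poly q z = 0 \<and> of_real \<alpha> = F z" if multiple: "has_multiple_root (pab c d \<alpha> \<beta>)" for \<alpha>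
  proof -
    obtain z where p: "poly (pab c d \<alpha> \<beta>) z = 0" and p': "poly (pderiv (pab c d \<alpha> \<beta>)) z = 0"
      using has_multiple_root_imp_common_root[OF multiple] by blast
    have "poly q z = 0"
      using p p' poly_alpha_eliminant[where \<alpha>=\<alpha> and \<beta>=\<beta>] unfolding q_def by simp
    moreover have "of_real \<alpha> = F z"
    proof (cases "g z = 0")
      case True
      \<comment> \<open>the junk value F z = 0 is right: p(z) = -\<beta>z^2 forces z = 0, and then p'(0) = 0 forces \<alpha> = 0\<close>
      with p assms have "z = 0" unfolding poly_pab g_def by simp
      with p' assms have "\<alpha> = 0" using poly_pderiv_pab_0[of c d \<alpha> \<beta>] by simp
      with True show ?thesis unfolding F_def by simp
    next
      case False
      from p have "of_real \<alpha> - z^2 = of_real \<beta> * z^2 / g z"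
        using False unfolding poly_pab g_def by (simp add: eq_divide_eq)
      with False show ?thesis unfolding F_def by (simp add: algebra_simps)
    qed
    ultimately show ?thesis by blast
  qed
  moreover have "q \<noteq> 0" "degree q = 5" unfolding q_def by simp_all
  ultimately show ?thesis
    using finite_card_le_degree_if_determined_by_roots[of q complex_of_real _ F] by (simp add: inj_on_def)
qed

lemma order_0_pab_alpha_0: "2 \<le> order 0 (pab c d 0 \<beta>)"
proof -
  have "pab c d 0 \<beta> = [:-0, 1:]^2 * [:-of_real (c+\<beta>), \<i> * of_real d, 1:]"
    by (subst poly_eq_poly_eq_iff[symmetric]) (auto simp: pab_def algebra_simps power2_eq_square)
  then have "[:-0, 1:]^2 dvd pab c d 0 \<beta>" by (metis dvd_triv_left)
  then show ?thesis using order_divides pab_nonzero by blast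
qed

lemma roots_pab_alpha_0:
  "{z. poly (pab c d 0 \<beta>) z = 0} =
     {0, csqrt (of_real (\<beta> + c - d^2/4)) - \<i> * of_real (d/2),
         - csqrt (of_real (\<beta> + c - d^2/4)) - \<i> * of_real (d/2)}"
proof -
  define s where "s = csqrt (of_real (\<beta> + c - d^2/4))"
  have s2: "s * s = of_real (\<beta> + c - d^2/4)"
    unfolding s_def by (metis power2_csqrt power2_eq_square)
  have "poly (pab c d 0 \<beta>) w = w^2 * ((w - (s - \<i> * of_real (d/2))) * (w - (- s - \<i> * of_real (d/2))))" for w
    unfolding poly_pab by (simp add: algebra_simps power2_eq_square s2)
  then show ?thesis unfolding s_def by auto
qed

lemma roots_pab_beta_0:
  "{z. poly (pab c d \<alpha> 0) z = 0} =
     {csqrt (of_real \<alpha>), - csqrt (of_real \<alpha>),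
      csqrt (of_real (c - d^2/4)) - \<i> * of_real (d/2),
      - csqrt (of_real (c - d^2/4)) - \<i> * of_real (d/2)}"
proof -
  define s where "s = csqrt (of_real (c - d^2/4))"
  define t where "t = csqrt (of_real \<alpha>)"
  have s2: "s * s = of_real (c - d^2/4)"
    unfolding s_def by (metis power2_csqrt power2_eq_square)
  have t2: "t * t = of_real \<alpha>"
    unfolding t_def by (metis power2_csqrt power2_eq_square)
  have "poly (pab c d \<alpha> 0) w =
          ((w - t) * (w + t)) * ((w - (s - \<i> * of_real (d/2))) * (w - (- s - \<i> * of_real (d/2))))" for w
    unfolding poly_pab by (simp add: algebra_simps power2_eq_square s2 t2)
  then show ?thesis unfolding s_def t_def by (auto simp: add_eq_0_iff)
qed

theorem lemma2p15:
  fixes c d :: real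
  assumes "c \<ge> 0" and "d > 0"
  shows
    "(\<forall>\<alpha>::real. \<alpha> \<noteq> 0 \<longrightarrow>
        finite {\<beta>::real. has_multiple_root (pab c d \<alpha> \<beta>)} \<and>
        card {\<beta>::real. has_multiple_root (pab c d \<alpha> \<beta>)} \<le> 4)
   \<and> (\<forall>\<beta>::real. \<beta> \<noteq> 0 \<longrightarrow>
        finite {\<alpha>::real. has_multiple_root (pab c d \<alpha> \<beta>)} \<and>
        card {\<alpha>::real. has_multiple_root (pab c d \<alpha> \<beta>)} \<le> 5)
   \<and> (\<forall>\<beta>::real.
        2 \<le> order 0 (pab c d 0 \<beta>) \<and>
        {z. poly (pab c d 0 \<beta>) z = 0} =
          {0, csqrt (complex_of_real (\<beta> + c - d^2/4)) - \<i> * complex_of_real (d/2),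
              - csqrt (complex_of_real (\<beta> + c - d^2/4)) - \<i> * complex_of_real (d/2)})
   \<and> (\<forall>\<alpha>::real.
        {z. poly (pab c d \<alpha> 0) z = 0} =
          {csqrt (complex_of_real \<alpha>), - csqrt (complex_of_real \<alpha>),
           csqrt (complex_of_real (c - d^2/4)) - \<i> * complex_of_real (d/2),
           - csqrt (complex_of_real (c - d^2/4)) - \<i> * complex_of_real (d/2)})"
  using finite_card_betas_with_multiple_root[OF assms(2)] finite_card_alphas_with_multiple_root[OF assms(2)]
    order_0_pab_alpha_0 roots_pab_alpha_0 roots_pab_beta_0
  by blast

end
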